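(* Let $A$ and $B$ be square $\mathbb{N}$-matrices. Then $A$ and $B$ are unitally shift equivalent if and only if their unital dimension data $(G_A,G_A^+,\theta_A,u_A)$ and $(G_B,G_B^+,\theta_B,u_B)$ are isomorphic, i.e. there is a group isomorphism $\Theta\colon G_A\to G_B$ with $\Theta(G_A^+)=G_B^+$, $\Theta\circ\theta_A=\theta_B\circ\Theta$ and $\Theta(u_A)=u_B$.
   Context: $\mathbb{N}=\{0,1,2,\dots\}$. For a square $\mathbb{N}$-matrix $A$ of size $|A|$, the dimension group is $G_A=(\mathbb{Z}^{|A|}\times\mathbb{N})/\sim$, where $(v,k)\sim(v',k')$ iff there is $l\in\mathbb{N}$ (with $l\ge k,k'$) such that $(A^t)^{l-k}v=(A^t)^{l-k'}v'$; write $[v,k]$ for classes. It is the inductive limit of $\mathbb{Z}^{|A|}\xrightarrow{A^t}\mathbb{Z}^{|A|}\xrightarrow{A^t}\cdots$. The positive cone is $G_A^+=\{[v,k]: v\in\mathbb{N}^{|A|}\}$, $\theta_A$ is the automorphism induced by multiplication by $A^t$, and $u_A=[\underline1,0]$ where $\underline1$ is the all-ones column vector. Two square $\mathbb{N}$-matrices $A,B$ are shift equivalent if there are an integer $\ell\ge1$ and rectangular $\mathbb{N}$-matrices $R,S$ with $A^\ell=RS$, $B^\ell=SR$, $AR=RB$, $BS=SA$. Such a shift equivalence $(R,S)$ is unital if there are $m,k\in\mathbb{N}$ with $(B^t)^mR^t\underline{1}=(B^t)^{m+k}\underline{1}$ (equivalently, the induced map $\hat R\colon G_A\to G_B$, $\hat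 R[v,k]=[R^tv,k]$, satisfies $\hat R(u_A)=\theta_B^k(u_B)$ for some $k\in\mathbb{N}$). $A$ and $B$ are unitally shift equivalent if a unital shift equivalence from $A$ to $B$ exists. *)

theory Defs
  imports "Jordan_Normal_Form.Matrix" "HOL-Algebra.Group"
begin

definition At :: "nat mat \<Rightarrow> int mat" where
  "At A = transpose_mat (map_mat int A)"

definition one_vec :: "nat \<Rightarrow> 'a::one vec" where
  "one_vec n = vec n (\<lambda>_. 1)"

definition dg_rel :: "nat mat \<Rightarrow> ((int vec \<times> nat) \<times> (int vec \<times> nat)) set" where
  "dg_rel A = {((v,k),(v',k')). v \<in> carrier_vec (dim_row A) \<and> v' \<in> carrier_vec (dim_row A) \<and>
      (\<exists>l. l \<ge> k \<and> l \<ge> k' \<and> (At A ^\<^sub>m (l - k)) *\<^sub>v v = (At A ^\<^sub>m (l - k')) *\<^sub>v v')}"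

definition dg_class :: "nat mat \<Rightarrow> int vec \<Rightarrow> nat \<Rightarrow> (int vec \<times> nat) set" where
  "dg_class A v k = dg_rel A `` {(v,k)}"

definition dg_carrier :: "nat mat \<Rightarrow> (int vec \<times> nat) set set" where
  "dg_carrier A = {dg_class A v k | v k. v \<in> carrier_vec (dim_row A)}"

definition dg_add :: "nat mat \<Rightarrow> (int vec \<times> nat) set \<Rightarrow> (int vec \<times> nat) set \<Rightarrow> (int vec \<times> nat) set" where
  "dg_add A X Y = dg_rel A `` {((At A ^\<^sub>m k') *\<^sub>v v + (At A ^\<^sub>m k) *\<^sub>v v', k + k') | v k v' k'.
       (v,k) \<in> X \<and> (v',k') \<in> Y}"

definition dim_group :: "nat mat \<Rightarrow> (int vec \<times> nat) set monoid" where
  "dim_group A = \<lparr>carrier = dg_carrier A, mult = dg_add A,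
      one = dg_class A (0\<^sub>v (dim_row A)) 0\<rparr>"

definition dg_pos :: "nat mat \<Rightarrow> (int vec \<times> nat) set set" where
  "dg_pos A = {dg_class A v k | v k. v \<in> carrier_vec (dim_row A) \<and> (\<forall>i < dim_row A. v $ i \<ge> 0)}"

definition dg_theta :: "nat mat \<Rightarrow> (int vec \<times> nat) set \<Rightarrow> (int vec \<times> nat) set" where
  "dg_theta A X = dg_rel A `` {(At A *\<^sub>v v, k) | v k. (v,k) \<in> X}"

definition dg_unit :: "nat mat \<Rightarrow> (int vec \<times> nat) set" where
  "dg_unit A = dg_class A (one_vec (dim_row A)) 0"

definition shift_equiv_via :: "nat mat \<Rightarrow> nat mat \<Rightarrow> nat \<Rightarrow> nat mat \<Rightarrow> nat mat \<Rightarrow> bool" where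
  "shift_equiv_via A B l R S \<longleftrightarrow> l \<ge> 1 \<and>
     R \<in> carrier_mat (dim_row A) (dim_row B) \<and> S \<in> carrier_mat (dim_row B) (dim_row A) \<and>
     A ^\<^sub>m l = R * S \<and> B ^\<^sub>m l = S * R \<and> A * R = R * B \<and> B * S = S * A"

definition unital_SE :: "nat mat \<Rightarrow> nat mat \<Rightarrow> nat mat \<Rightarrow> bool" where
  "unital_SE A B R \<longleftrightarrow> (\<exists>m k. (transpose_mat B ^\<^sub>m m) *\<^sub>v (transpose_mat R *\<^sub>v one_vec (dim_row A))
      = (transpose_mat B ^\<^sub>m (m + k)) *\<^sub>v one_vec (dim_row B))"

definition unitally_shift_equivalent :: "nat mat \<Rightarrow> nat mat \<Rightarrow> bool" where
  "unitally_shift_equivalent A B \<longleftrightarrow>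
     (\<exists>l R S. shift_equiv_via A B l R S \<and> unital_SE A B R)"

end

(* A shift equivalence (R, S) of lag l induces [v,k] |-> [R^t v, k], which commutes with theta
   and maps the positive cone onto the positive cone; composed in either order with the map
   induced by S it is theta^l, so it is bijective. Unitality says exactly that it sends u_A to
   theta_B^k u_B, so following it by theta_B^-k gives an isomorphism of unital dimension data.

   Conversely, an isomorphism Theta of unital dimension data sends every generator [e_i, 0] to
   a positive class. At a common level K these classes are represented by N-vectors, the rows
   of an N-matrix R; since Theta is additive and commutes with theta, Theta [v, j] = [R^t v, j + K]
   for all v and j, and replacing R by R B^P makes A R = R B hold exactly. Doing the same for
   the inverse of Theta yields S, and composing the two normal forms shows
   (A^t)^Q S^t R^t = (A^t)^(Q + K') for all large Q. Then (R, S A^Q) is a shift equivalence of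
   lag Q + K', and it is unital because Theta u_A = u_B. *)

theory Submission
  imports Defs
begin

interpretation of_nat_int: inj_semiring_hom "of_nat :: nat \<Rightarrow> int"
  by unfold_locales auto

lemma Image_eq_equiv_class:
  assumes "equiv E r" "x \<in> S" "S \<subseteq> r `` {x}"
  shows "r `` S = r `` {x}"
proof -
  have "r `` {y} = r `` {x}" if "y \<in> S" for y
    using assms that by (metis Image_singleton_iff equiv_class_eq subsetD)
  then show ?thesis using assms(2) by blast
qed

lemma funpow_intertwine:
  assumes "f ` S \<subseteq> S" and "\<And>x. x \<in> S \<Longrightarrow> h (f x) = g (h x)" and "x \<in> S"
  shows "h ((f ^^ j) x) = (g ^^ j) (h x)"
proof -
  have "(f ^^ j) x \<in> S \<and> h ((f ^^ j) x) = (g ^^ j) (h x)"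
    by (induction j) (use assms in auto)
  then show ?thesis ..
qed

lemma inv_into_intertwine:
  assumes h: "bij_betw h S T" and f: "f ` S \<subseteq> S" and commute: "\<forall>x\<in>S. h (f x) = g (h x)"
    and y: "y \<in> T"
  shows "inv_into S h (g y) = f (inv_into S h y)"
proof -
  have x: "inv_into S h y \<in> S" and "h (inv_into S h y) = y"
    using bij_betw_inv_into_right[OF h y] y h by (auto simp: bij_betw_def inv_into_into)
  then have "g y = h (f (inv_into S h y))" using commute by simp
  then show ?thesis using bij_betw_inv_into_left[OF h] f x by auto
qed

section \<open>Matrices and integer vectors\<close>

lemma pow_mat_add:
  assumes "(T :: 'a :: semiring_1 mat) \<in> carrier_mat n n"
  shows "T ^\<^sub>m (a + b) = T ^\<^sub>m a * T ^\<^sub>m b"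
proof (induction b)
  case (Suc b)
  then have "T ^\<^sub>m (a + Suc b) = (T ^\<^sub>m a * T ^\<^sub>m b) * T" by simp
  also have "\<dots> = T ^\<^sub>m a * T ^\<^sub>m Suc b" using assms by (simp add: assoc_mult_mat[of _ n n _ n _ n])
  finally show ?case .
qed (use assms in simp)

lemma pow_mat_commute:
  assumes "(T :: 'a :: semiring_1 mat) \<in> carrier_mat n n"
  shows "T * T ^\<^sub>m a = T ^\<^sub>m a * T"
  using pow_mat_add[OF assms, of 1 a] pow_mat_add[OF assms, of a 1] assms by (simp add: add.commute)

lemma pow_mat_mult_vec:
  assumes "(T :: 'a :: semiring_1 mat) \<in> carrier_mat n n" and "v \<in> carrier_vec n"
  shows "T ^\<^sub>m a *\<^sub>v (T ^\<^sub>m b *\<^sub>v v) = T ^\<^sub>m (a + b) *\<^sub>v v"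
  using assms by (simp add: pow_mat_add assoc_mult_mat_vec[of _ n n _ n v])

lemma pow_mat_mult_vec_carrier [simp]:
  "(T :: 'a :: semiring_1 mat) \<in> carrier_mat n n \<Longrightarrow> v \<in> carrier_vec n \<Longrightarrow> T ^\<^sub>m a *\<^sub>v v \<in> carrier_vec n"
  by (metis mult_mat_vec_carrier pow_carrier_mat)

lemma pow_mat_mult_add_vec:
  assumes "(T :: 'a :: semiring_1 mat) \<in> carrier_mat n n" "v \<in> carrier_vec n" "w \<in> carrier_vec n"
  shows "T ^\<^sub>m a *\<^sub>v (T ^\<^sub>m b *\<^sub>v v + T ^\<^sub>m c *\<^sub>v w) = T ^\<^sub>m (a + b) *\<^sub>v v + T ^\<^sub>m (a + c) *\<^sub>v w"
  using assms by (simp add: mult_add_distrib_mat_vec[of _ n n] pow_mat_mult_vec)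

lemma pow_mat_vec_eq_shift:
  assumes "(T :: 'a :: semiring_1 mat) \<in> carrier_mat n n" "v \<in> carrier_vec n" "w \<in> carrier_vec n"
    and "T ^\<^sub>m a *\<^sub>v v = T ^\<^sub>m b *\<^sub>v w"
  shows "T ^\<^sub>m (c + a) *\<^sub>v v = T ^\<^sub>m (c + b) *\<^sub>v w"
  by (metis assms pow_mat_mult_vec)

lemma intertwining_pow_mat:
  assumes "(R :: 'a :: semiring_1 mat) \<in> carrier_mat m n" "S \<in> carrier_mat n n" "T \<in> carrier_mat m m"
    and "R * S = T * R"
  shows "R * S ^\<^sub>m a = T ^\<^sub>m a * R"
proof (induction a)
  case (Suc a)
  have "R * S ^\<^sub>m Suc a = (R * S ^\<^sub>m a) * S" using assms by (simp add: assoc_mult_mat[of _ m n _ n _ n])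
  also have "\<dots> = T ^\<^sub>m a * (R * S)" using assms Suc by (simp add: assoc_mult_mat[of _ m m _ n _ n])
  also have "\<dots> = T ^\<^sub>m Suc a * R" using assms by (simp add: assoc_mult_mat[of _ m m _ m _ n])
  finally show ?case .
qed (use assms in simp)

lemma intertwining_mult_pow_mat:
  assumes R: "(R :: 'a :: semiring_1 mat) \<in> carrier_mat m n" and S: "S \<in> carrier_mat n n"
    and T: "T \<in> carrier_mat m m" and eq: "T ^\<^sub>m p * (R * S) = T ^\<^sub>m p * (T * R)"
  shows "(T ^\<^sub>m p * R) * S = T * (T ^\<^sub>m p * R)"
proof -
  have Tp: "T ^\<^sub>m p \<in> carrier_mat m m" using T by simp
  have "(T ^\<^sub>m p * R) * S = (T ^\<^sub>m p * T) * R"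
    using eq Tp R S T by (simp add: assoc_mult_mat[of _ m m _ m _ n] assoc_mult_mat[of _ m m _ n _ n])
  also have "\<dots> = (T * T ^\<^sub>m p) * R" using pow_mat_commute[OF T, of p] by simp
  also have "\<dots> = T * (T ^\<^sub>m p * R)" using T Tp R by (rule assoc_mult_mat)
  finally show ?thesis .
qed

lemma intertwining_pow_mat_vec:
  assumes "(R :: 'a :: semiring_1 mat) \<in> carrier_mat m n" "S \<in> carrier_mat n n" "T \<in> carrier_mat m m"
    and "R * S = T * R" and "v \<in> carrier_vec n"
  shows "R *\<^sub>v (S ^\<^sub>m a *\<^sub>v v) = T ^\<^sub>m a *\<^sub>v (R *\<^sub>v v)"
  using intertwining_pow_mat[OF assms(1-4), of a] assms
  by (metis assoc_mult_mat_vec pow_carrier_mat)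

lemma mult_mat_vec_zero [simp]: "(M :: 'a :: semiring_0 mat) *\<^sub>v 0\<^sub>v c = 0\<^sub>v (dim_row M)"
  by (intro eq_vecI) (auto simp: scalar_prod_def)

lemma mult_mat_vec_uminus:
  "(M :: 'a :: ring mat) \<in> carrier_mat r c \<Longrightarrow> v \<in> carrier_vec c \<Longrightarrow> M *\<^sub>v - v = - (M *\<^sub>v v)"
  by (intro eq_vecI) auto

lemma eq_mat_unit_vecI:
  assumes "(M :: 'a :: semiring_1 mat) \<in> carrier_mat r c" "N \<in> carrier_mat r c"
    and "\<And>i. i < c \<Longrightarrow> M *\<^sub>v unit_vec c i = N *\<^sub>v unit_vec c i"
  shows "M = N"
proof (rule eq_matI)
  fix i j assume "i < dim_row N" "j < dim_col N"
  then show "M $$ (i, j) = N $$ (i, j)"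
    using assms(1,2) arg_cong[OF assms(3)[of j], of "\<lambda>v. v $ i"] by (simp add: mult_mat_vec_def)
qed (use assms in auto)

lemma smult_vec_eq_int_pow:
  assumes v: "(v :: int vec) \<in> carrier_vec n"
  shows "c \<cdot>\<^sub>v v = v [^]\<^bsub>monoid_vec TYPE(int) n\<^esub> c"
proof -
  interpret Zn: comm_group "monoid_vec TYPE(int) n" by (rule comm_group_vec)
  have nat_pow: "int k \<cdot>\<^sub>v v = v [^]\<^bsub>monoid_vec TYPE(int) n\<^esub> k" for k
  proof (induction k)
    case 0 then show ?case using v by (intro eq_vecI) (auto simp: monoid_vec_simps)
  next
    case (Suc k)
    have "int (Suc k) \<cdot>\<^sub>v v = int k \<cdot>\<^sub>v v + v" using v by (intro eq_vecI) (auto simp: algebra_simps)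
    then show ?case using Suc by (simp add: monoid_vec_simps)
  qed
  show ?thesis
  proof (cases "c < 0")
    case True
    have "c \<cdot>\<^sub>v v = - (int (nat (- c)) \<cdot>\<^sub>v v)"
      using True by (intro eq_vecI) auto
    also have "\<dots> = inv\<^bsub>monoid_vec TYPE(int) n\<^esub> (int (nat (- c)) \<cdot>\<^sub>v v)"
      using Zn.inv_equality[of "- (int (nat (- c)) \<cdot>\<^sub>v v)"] v by (simp add: monoid_vec_simps)
    also have "\<dots> = v [^]\<^bsub>monoid_vec TYPE(int) n\<^esub> c"
      unfolding nat_pow int_pow_def2 using True by simp
    finally show ?thesis .
  next
    case False
    then show ?thesis unfolding int_pow_def2 using nat_pow[of "nat c"] by simp
  qed
qed

lemma hom_int_vecs_eqI:
  assumes G: "group G"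
    and f: "f \<in> hom (monoid_vec TYPE(int) n) G" and g: "g \<in> hom (monoid_vec TYPE(int) n) G"
    and units: "\<And>i. i < n \<Longrightarrow> f (unit_vec n i) = g (unit_vec n i)"
    and v: "v \<in> carrier_vec n"
  shows "f v = g v"
proof -
  have Zn: "group (monoid_vec TYPE(int) n)" by (rule comm_group.axioms(2)[OF comm_group_vec])
  have add: "h (x + y) = h x \<otimes>\<^bsub>G\<^esub> h y"
    if "h \<in> hom (monoid_vec TYPE(int) n) G" "x \<in> carrier_vec n" "y \<in> carrier_vec n" for h x y
    using hom_mult[OF that(1), of x y] that by (simp add: monoid_vec_simps)
  have scaled_units: "f (c \<cdot>\<^sub>v unit_vec n i) = g (c \<cdot>\<^sub>v unit_vec n i)" if "i < n" for c i
    using hom_int_pow[OF f _ Zn G] hom_int_pow[OF g _ Zn G] units[OF that]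
    by (simp add: smult_vec_eq_int_pow[OF unit_vec_carrier] monoid_vec_simps)
  define trunc where "trunc t = vec n (\<lambda>i. if i < t then v $ i else 0)" for t
  have "f (trunc t) = g (trunc t)" if "t \<le> n" for t
    using that
  proof (induction t)
    case 0
    have "trunc 0 = \<one>\<^bsub>monoid_vec TYPE(int) n\<^esub>"
      unfolding trunc_def by (intro eq_vecI) (auto simp: monoid_vec_simps)
    then show ?case using hom_one[OF f Zn G] hom_one[OF g Zn G] by simp
  next
    case (Suc t)
    have "trunc (Suc t) = trunc t + v $ t \<cdot>\<^sub>v unit_vec n t"
      unfolding trunc_def using Suc.prems by (intro eq_vecI) (auto simp: less_Suc_eq)
    moreover have "trunc t \<in> carrier_vec n" "v $ t \<cdot>\<^sub>v unit_vec n t \<in> carrier_vec n"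
      unfolding trunc_def by auto
    ultimately show ?case using Suc add[OF f] add[OF g] scaled_units[of t] by simp
  qed
  moreover have "trunc n = v" unfolding trunc_def using v by (intro eq_vecI) auto
  ultimately show ?thesis by auto
qed

lemma dim_At [simp]: "dim_row (At A) = dim_col A" "dim_col (At A) = dim_row A"
  unfolding At_def by simp_all

lemma transpose_mult_vec_carrier:
  "A \<in> carrier_mat r c \<Longrightarrow> u \<in> carrier_vec r \<Longrightarrow> A\<^sup>T *\<^sub>v u \<in> carrier_vec c"
  by (metis mult_mat_vec_carrier transpose_carrier_mat)

lemma At_carrier_mat [simp]: "A \<in> carrier_mat r c \<Longrightarrow> At A \<in> carrier_mat c r"
  unfolding At_def by auto

lemma At_mult_vec_carrier [simp]: "A \<in> carrier_mat r c \<Longrightarrow> v \<in> carrier_vec r \<Longrightarrow> At A *\<^sub>v v \<in> carrier_vec c"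
  by (metis At_carrier_mat mult_mat_vec_carrier)

lemma At_mult: "A \<in> carrier_mat r k \<Longrightarrow> B \<in> carrier_mat k c \<Longrightarrow> At (A * B) = At B * At A"
  unfolding At_def by (simp add: of_nat_int.mat_hom_mult transpose_mult[of _ r k _ c])

lemma At_pow_mat: "A \<in> carrier_mat n n \<Longrightarrow> At (A ^\<^sub>m k) = At A ^\<^sub>m k"
proof (induction k)
  case 0 then show ?case unfolding At_def by (auto simp: of_nat_int.mat_hom_one)
next
  case (Suc k)
  then show ?case using At_mult[of "A ^\<^sub>m k" n n A n] by (simp add: pow_mat_commute[of "At A" n])
qed

lemma At_inject: "At A = At B \<longleftrightarrow> A = B"
  unfolding At_def using of_nat_int.mat_hom_inj by auto

lemma At_mult_of_nat_vec:
  "A \<in> carrier_mat r c \<Longrightarrow> u \<in> carrier_vec r \<Longrightarrow> At A *\<^sub>v map_vec int u = map_vec int (A\<^sup>T *\<^sub>v u)"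
  unfolding At_def by (simp add: of_nat_int.mult_mat_vec_hom[of _ c r] map_mat_transpose)

lemma At_mult_unit_vec:
  "A \<in> carrier_mat r c \<Longrightarrow> i < r \<Longrightarrow> At A *\<^sub>v unit_vec r i = map_vec int (row A i)"
  unfolding At_def by (intro eq_vecI) (auto simp: scalar_prod_right_unit)

lemma map_vec_int_transpose_pow_mult:
  assumes B: "B \<in> carrier_mat m m" and u: "u \<in> carrier_vec m"
  shows "map_vec int (B\<^sup>T ^\<^sub>m p *\<^sub>v u) = At B ^\<^sub>m p *\<^sub>v map_vec int u"
proof -
  have BT: "B\<^sup>T \<in> carrier_mat m m" using B by simp
  show ?thesis
    using of_nat_int.mult_mat_vec_hom[OF pow_carrier_mat[OF BT] u] of_nat_int.mat_hom_pow[OF BT]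
    by (simp add: At_def map_mat_transpose)
qed

lemma map_vec_int_one_vec: "map_vec int (one_vec k) = one_vec k"
  unfolding one_vec_def by (intro eq_vecI) auto

lemma one_vec_carrier [simp]: "one_vec k \<in> carrier_vec k"
  unfolding one_vec_def by simp

section \<open>The dimension group\<close>

lemma dg_rel_iff:
  assumes "A \<in> carrier_mat n n"
  shows "((v, k), (v', k')) \<in> dg_rel A \<longleftrightarrow> v \<in> carrier_vec n \<and> v' \<in> carrier_vec n \<and>
     (\<exists>p. At A ^\<^sub>m (p + k') *\<^sub>v v = At A ^\<^sub>m (p + k) *\<^sub>v v')"
proof -
  have T: "At A \<in> carrier_mat n n" using assms by simp
  have "(\<exists>l\<ge>k. l \<ge> k' \<and> At A ^\<^sub>m (l - k) *\<^sub>v v = At A ^\<^sub>m (l - k') *\<^sub>v v') \<longleftrightarrow>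
      (\<exists>p. At A ^\<^sub>m (p + k') *\<^sub>v v = At A ^\<^sub>m (p + k) *\<^sub>v v')"
    if "v \<in> carrier_vec n" "v' \<in> carrier_vec n"
  proof
    assume "\<exists>l\<ge>k. l \<ge> k' \<and> At A ^\<^sub>m (l - k) *\<^sub>v v = At A ^\<^sub>m (l - k') *\<^sub>v v'"
    then obtain l where "l \<ge> k" "l \<ge> k'" "At A ^\<^sub>m (l - k) *\<^sub>v v = At A ^\<^sub>m (l - k') *\<^sub>v v'" by blast
    then show "\<exists>p. At A ^\<^sub>m (p + k') *\<^sub>v v = At A ^\<^sub>m (p + k) *\<^sub>v v'"
      using pow_mat_vec_eq_shift[OF T that, of "l - k" "l - k'" "k + k'"] by (metis add.commute le_add_diff_inverse2 add.left_commute)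
  next
    assume "\<exists>p. At A ^\<^sub>m (p + k') *\<^sub>v v = At A ^\<^sub>m (p + k) *\<^sub>v v'"
    then obtain p where "At A ^\<^sub>m (p + k') *\<^sub>v v = At A ^\<^sub>m (p + k) *\<^sub>v v'" by blast
    then show "\<exists>l\<ge>k. l \<ge> k' \<and> At A ^\<^sub>m (l - k) *\<^sub>v v = At A ^\<^sub>m (l - k') *\<^sub>v v'"
      by (intro exI[of _ "p + k + k'"]) (simp add: add.commute add.left_commute)
  qed
  then show ?thesis unfolding dg_rel_def using assms by auto
qed

lemma equiv_dg_rel:
  assumes A: "A \<in> carrier_mat n n"
  shows "equiv (carrier_vec n \<times> UNIV) (dg_rel A)"
proof (rule equivI)
  have T: "At A \<in> carrier_mat n n" using A by simp
  show "dg_rel A \<subseteq> (carrier_vec n \<times> UNIV) \<times> (carrier_vec n \<times> UNIV)"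
    unfolding dg_rel_def using A by auto
  show "refl_on (carrier_vec n \<times> UNIV) (dg_rel A)"
    unfolding refl_on_def by (auto simp: dg_rel_iff[OF A])
  show "sym (dg_rel A)"
    unfolding sym_def by (auto simp: dg_rel_iff[OF A]) metis
  show "trans (dg_rel A)"
  proof (rule transI, clarify)
    fix v k v' k' v'' k''
    assume "((v, k), (v', k')) \<in> dg_rel A" "((v', k'), (v'', k'')) \<in> dg_rel A"
    then obtain p q where c: "v \<in> carrier_vec n" "v' \<in> carrier_vec n" "v'' \<in> carrier_vec n"
      and p: "At A ^\<^sub>m (p + k') *\<^sub>v v = At A ^\<^sub>m (p + k) *\<^sub>v v'"
      and q: "At A ^\<^sub>m (q + k'') *\<^sub>v v' = At A ^\<^sub>m (q + k') *\<^sub>v v''"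
      unfolding dg_rel_iff[OF A] by blast
    have "At A ^\<^sub>m ((p + q + k') + k'') *\<^sub>v v = At A ^\<^sub>m ((q + k'') + (p + k)) *\<^sub>v v'"
      using pow_mat_vec_eq_shift[OF T c(1,2) p, of "q + k''"] by (simp add: ac_simps)
    also have "\<dots> = At A ^\<^sub>m ((p + q + k') + k) *\<^sub>v v''"
      using pow_mat_vec_eq_shift[OF T c(2,3) q, of "p + k"] by (simp add: ac_simps)
    finally show "((v, k), (v'', k'')) \<in> dg_rel A" unfolding dg_rel_iff[OF A] using c by blast
  qed
qed

lemma dg_class_eq_iff:
  assumes A: "A \<in> carrier_mat n n" and "v \<in> carrier_vec n" "v' \<in> carrier_vec n"
  shows "dg_class A v k = dg_class A v' k' \<longleftrightarrow> (\<exists>p. At A ^\<^sub>m (p + k') *\<^sub>v v = At A ^\<^sub>m (p + k) *\<^sub>v v')"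
proof -
  have "dg_class A v k = dg_class A v' k' \<longleftrightarrow> ((v, k), (v', k')) \<in> dg_rel A"
    unfolding dg_class_def using equiv_class_eq_iff[OF equiv_dg_rel[OF A]] assms(2,3) by auto
  then show ?thesis using dg_rel_iff[OF A] assms(2,3) by blast
qed

lemma dg_class_eq_imp_eventually:
  assumes A: "A \<in> carrier_mat n n" and v: "v \<in> carrier_vec n" "v' \<in> carrier_vec n"
    and "dg_class A v k = dg_class A v' k'"
  shows "eventually (\<lambda>p. At A ^\<^sub>m (p + k') *\<^sub>v v = At A ^\<^sub>m (p + k) *\<^sub>v v') sequentially"
proof -
  obtain p where p: "At A ^\<^sub>m (p + k') *\<^sub>v v = At A ^\<^sub>m (p + k) *\<^sub>v v'"
    using assms dg_class_eq_iff by blast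
  show ?thesis
  proof (rule eventually_sequentiallyI)
    fix q assume "p \<le> q"
    then show "At A ^\<^sub>m (q + k') *\<^sub>v v = At A ^\<^sub>m (q + k) *\<^sub>v v'"
      using pow_mat_vec_eq_shift[OF At_carrier_mat[OF A] v p, of "q - p"] by (simp add: add.assoc[symmetric])
  qed
qed

lemma dg_class_unit_vecs_eq_imp_eventually:
  assumes B: "B \<in> carrier_mat m m" and M: "M \<in> carrier_mat m n" and N: "N \<in> carrier_mat m n"
    and eq: "\<And>i. i < n \<Longrightarrow> dg_class B (M *\<^sub>v unit_vec n i) k = dg_class B (N *\<^sub>v unit_vec n i) k'"
  shows "eventually (\<lambda>p. At B ^\<^sub>m (p + k') * M = At B ^\<^sub>m (p + k) * N) sequentially"
proof -
  have "eventually (\<lambda>p. \<forall>i\<in>{..<n}. At B ^\<^sub>m (p + k') *\<^sub>v (M *\<^sub>v unit_vec n i) =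
      At B ^\<^sub>m (p + k) *\<^sub>v (N *\<^sub>v unit_vec n i)) sequentially"
    using M N eq by (intro eventually_ball_finite ballI dg_class_eq_imp_eventually[OF B]) auto
  then show ?thesis
  proof (rule eventually_mono)
    fix p assume "\<forall>i\<in>{..<n}. At B ^\<^sub>m (p + k') *\<^sub>v (M *\<^sub>v unit_vec n i) =
      At B ^\<^sub>m (p + k) *\<^sub>v (N *\<^sub>v unit_vec n i)"
    then show "At B ^\<^sub>m (p + k') * M = At B ^\<^sub>m (p + k) * N"
      using B M N by (intro eq_mat_unit_vecI[of _ m n]) (auto simp: assoc_mult_mat_vec[of _ m m _ n])
  qed
qed

lemma dg_class_shift:
  assumes A: "A \<in> carrier_mat n n" and v: "v \<in> carrier_vec n"
  shows "dg_class A (At A ^\<^sub>m a *\<^sub>v v) (k + a) = dg_class A v k"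
proof -
  have "At A ^\<^sub>m (0 + k) *\<^sub>v (At A ^\<^sub>m a *\<^sub>v v) = At A ^\<^sub>m (0 + (k + a)) *\<^sub>v v"
    using pow_mat_mult_vec[of "At A" n v k a] A v by simp
  moreover have "At A ^\<^sub>m a *\<^sub>v v \<in> carrier_vec n" using A v by simp
  ultimately show ?thesis using dg_class_eq_iff[OF A] v by blast
qed

lemma mem_dg_class_iff:
  assumes "A \<in> carrier_mat n n" "v \<in> carrier_vec n"
  shows "(w, j) \<in> dg_class A v k \<longleftrightarrow> w \<in> carrier_vec n \<and> dg_class A w j = dg_class A v k"
  unfolding dg_class_def using equiv_class_eq_iff[OF equiv_dg_rel[OF assms(1)]] assms(2) 
  by (auto simp: dg_rel_iff[OF assms(1)])

lemma carrier_dim_group_iff: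
  "A \<in> carrier_mat n n \<Longrightarrow> X \<in> carrier (dim_group A) \<longleftrightarrow> (\<exists>v k. v \<in> carrier_vec n \<and> X = dg_class A v k)"
  unfolding dim_group_def dg_carrier_def by auto

lemma dg_class_carrier [simp]:
  "A \<in> carrier_mat n n \<Longrightarrow> v \<in> carrier_vec n \<Longrightarrow> dg_class A v k \<in> carrier (dim_group A)"
  using carrier_dim_group_iff by blast

lemma dim_group_cases:
  assumes "A \<in> carrier_mat n n" "X \<in> carrier (dim_group A)"
  obtains v k where "v \<in> carrier_vec n" "X = dg_class A v k"
  using assms carrier_dim_group_iff by blast

lemma dg_class_intertwiner_eq:
  assumes A: "A \<in> carrier_mat n n" and B: "B \<in> carrier_mat m m" and M: "M \<in> carrier_mat m n"
    and MT: "M * At A = At B * M" and v: "v \<in> carrier_vec n" "v' \<in> carrier_vec n"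
    and eq: "dg_class A v k = dg_class A v' k'"
  shows "dg_class B (M *\<^sub>v v) (k + K) = dg_class B (M *\<^sub>v v') (k' + K)"
proof -
  obtain p where "At A ^\<^sub>m (p + k') *\<^sub>v v = At A ^\<^sub>m (p + k) *\<^sub>v v'"
    using eq dg_class_eq_iff[OF A v] by blast
  then have "At A ^\<^sub>m (p + (k' + K)) *\<^sub>v v = At A ^\<^sub>m (p + (k + K)) *\<^sub>v v'"
    using pow_mat_vec_eq_shift[OF At_carrier_mat[OF A] v, of "p + k'" "p + k" K] by (simp add: ac_simps)
  then have "At B ^\<^sub>m (p + (k' + K)) *\<^sub>v (M *\<^sub>v v) = At B ^\<^sub>m (p + (k + K)) *\<^sub>v (M *\<^sub>v v')"
    by (metis intertwining_pow_mat_vec[OF M At_carrier_mat[OF A] At_carrier_mat[OF B] MT] v)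
  then show ?thesis using dg_class_eq_iff[OF B] M v by auto
qed

(* The paper's R-hat is dg_map B (At R) 0; the shift K composes it with theta_B^-K. *)
definition dg_map :: "nat mat \<Rightarrow> int mat \<Rightarrow> nat \<Rightarrow> (int vec \<times> nat) set \<Rightarrow> (int vec \<times> nat) set" where
  "dg_map B M K X = dg_rel B `` {(M *\<^sub>v v, j + K) | v j. (v, j) \<in> X}"

lemma dg_map_class:
  assumes A: "A \<in> carrier_mat n n" and B: "B \<in> carrier_mat m m" and M: "M \<in> carrier_mat m n"
    and MT: "M * At A = At B * M" and v: "v \<in> carrier_vec n"
  shows "dg_map B M K (dg_class A v j) = dg_class B (M *\<^sub>v v) (j + K)"
  unfolding dg_map_def dg_class_def[of B]
proof (rule Image_eq_equiv_class[OF equiv_dg_rel[OF B]])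
  have "(v, j) \<in> dg_class A v j" using mem_dg_class_iff[OF A v] v by blast
  then show "(M *\<^sub>v v, j + K) \<in> {(M *\<^sub>v v', j' + K) | v' j'. (v', j') \<in> dg_class A v j}" by blast
  show "{(M *\<^sub>v v', j' + K) | v' j'. (v', j') \<in> dg_class A v j} \<subseteq> dg_rel B `` {(M *\<^sub>v v, j + K)}"
  proof
    fix y assume "y \<in> {(M *\<^sub>v v', j' + K) | v' j'. (v', j') \<in> dg_class A v j}"
    then obtain v' j' where y: "y = (M *\<^sub>v v', j' + K)" and "(v', j') \<in> dg_class A v j" by blast
    then have v': "v' \<in> carrier_vec n" and "dg_class A v j = dg_class A v' j'"
      using mem_dg_class_iff[OF A v] by auto
    then have "dg_class B (M *\<^sub>v v') (j' + K) = dg_class B (M *\<^sub>v v) (j + K)"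
      using dg_class_intertwiner_eq[OF A B M MT v v'] by simp
    then show "y \<in> dg_rel B `` {(M *\<^sub>v v, j + K)}" unfolding y
      using mem_dg_class_iff[OF B, of "M *\<^sub>v v"] M v v' unfolding dg_class_def by auto
  qed
qed

lemma dg_theta_class:
  assumes A: "A \<in> carrier_mat n n" and v: "v \<in> carrier_vec n"
  shows "dg_theta A (dg_class A v k) = dg_class A (At A *\<^sub>v v) k"
proof -
  have "dg_theta A X = dg_map A (At A) 0 X" for X
    unfolding dg_theta_def dg_map_def by simp
  then show ?thesis using dg_map_class[OF A A At_carrier_mat[OF A] refl v] by simp
qed

lemma dg_theta_pow_class:
  assumes A: "A \<in> carrier_mat n n" and v: "v \<in> carrier_vec n"
  shows "(dg_theta A ^^ j) (dg_class A v k) = dg_class A (At A ^\<^sub>m j *\<^sub>v v) k"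
proof (induction j)
  case (Suc j)
  have "At A *\<^sub>v (At A ^\<^sub>m j *\<^sub>v v) = At A ^\<^sub>m Suc j *\<^sub>v v"
    using pow_mat_mult_vec[OF _ v, of "At A" 1 j] A by simp
  then show ?case using Suc A v by (simp add: dg_theta_class)
qed (use A v in simp)

lemma dg_theta_carrier:
  assumes A: "A \<in> carrier_mat n n" and "X \<in> carrier (dim_group A)"
  shows "dg_theta A X \<in> carrier (dim_group A)"
  using assms(2) by (rule dim_group_cases[OF A])
    (use A mult_mat_vec_carrier[OF At_carrier_mat[OF A]] in \<open>simp add: dg_theta_class\<close>)

lemma inj_on_dg_theta_pow:
  assumes A: "A \<in> carrier_mat n n"
  shows "inj_on (dg_theta A ^^ j) (carrier (dim_group A))"
proof (rule inj_onI)
  have T: "At A \<in> carrier_mat n n" using A by simp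
  fix X Y assume "X \<in> carrier (dim_group A)" "Y \<in> carrier (dim_group A)"
    and eq: "(dg_theta A ^^ j) X = (dg_theta A ^^ j) Y"
  then obtain v k v' k' where v: "v \<in> carrier_vec n" "v' \<in> carrier_vec n"
    and XY: "X = dg_class A v k" "Y = dg_class A v' k'"
    using A by (metis dim_group_cases)
  then obtain p where "At A ^\<^sub>m (p + k') *\<^sub>v (At A ^\<^sub>m j *\<^sub>v v) = At A ^\<^sub>m (p + k) *\<^sub>v (At A ^\<^sub>m j *\<^sub>v v')"
    using eq dg_class_eq_iff[OF A] T by (auto simp: dg_theta_pow_class[OF A])
  then have "At A ^\<^sub>m ((p + j) + k') *\<^sub>v v = At A ^\<^sub>m ((p + j) + k) *\<^sub>v v'"
    using T v by (simp add: pow_mat_mult_vec ac_simps)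
  then show "X = Y" using XY dg_class_eq_iff[OF A v] by blast
qed

lemma dg_class_add_eq:
  assumes A: "A \<in> carrier_mat n n"
    and v: "v \<in> carrier_vec n" "v1 \<in> carrier_vec n" "v' \<in> carrier_vec n" "v1' \<in> carrier_vec n"
    and eq: "dg_class A v1 k1 = dg_class A v k" "dg_class A v1' k1' = dg_class A v' k'"
  shows "dg_class A (At A ^\<^sub>m k1' *\<^sub>v v1 + At A ^\<^sub>m k1 *\<^sub>v v1') (k1 + k1') =
    dg_class A (At A ^\<^sub>m k' *\<^sub>v v + At A ^\<^sub>m k *\<^sub>v v') (k + k')"
proof -
  let ?T = "At A"
  have T: "?T \<in> carrier_mat n n" using A by simp
  obtain p q where p: "?T ^\<^sub>m (p + k) *\<^sub>v v1 = ?T ^\<^sub>m (p + k1) *\<^sub>v v"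
    and q: "?T ^\<^sub>m (q + k') *\<^sub>v v1' = ?T ^\<^sub>m (q + k1') *\<^sub>v v'"
    using eq dg_class_eq_iff[OF A] v by meson
  have "?T ^\<^sub>m (p + q + (k + k')) *\<^sub>v (?T ^\<^sub>m k1' *\<^sub>v v1 + ?T ^\<^sub>m k1 *\<^sub>v v1') =
      ?T ^\<^sub>m ((q + k' + k1') + (p + k)) *\<^sub>v v1 + ?T ^\<^sub>m ((p + k + k1) + (q + k')) *\<^sub>v v1'"
    using pow_mat_mult_add_vec[OF T v(2,4)] by (simp add: ac_simps)
  also have "\<dots> = ?T ^\<^sub>m ((q + k' + k1') + (p + k1)) *\<^sub>v v + ?T ^\<^sub>m ((p + k + k1) + (q + k1')) *\<^sub>v v'"
    using pow_mat_vec_eq_shift[OF T v(2,1) p] pow_mat_vec_eq_shift[OF T v(4,3) q] by simp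
  also have "\<dots> = ?T ^\<^sub>m (p + q + (k1 + k1')) *\<^sub>v (?T ^\<^sub>m k' *\<^sub>v v + ?T ^\<^sub>m k *\<^sub>v v')"
    using pow_mat_mult_add_vec[OF T v(1,3)] by (simp add: ac_simps)
  finally have "?T ^\<^sub>m (p + q + (k + k')) *\<^sub>v (?T ^\<^sub>m k1' *\<^sub>v v1 + ?T ^\<^sub>m k1 *\<^sub>v v1') =
      ?T ^\<^sub>m (p + q + (k1 + k1')) *\<^sub>v (?T ^\<^sub>m k' *\<^sub>v v + ?T ^\<^sub>m k *\<^sub>v v')" .
  moreover have "?T ^\<^sub>m k1' *\<^sub>v v1 + ?T ^\<^sub>m k1 *\<^sub>v v1' \<in> carrier_vec n"
    and "?T ^\<^sub>m k' *\<^sub>v v + ?T ^\<^sub>m k *\<^sub>v v' \<in> carrier_vec n" using T v by simp_all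
  ultimately show ?thesis using dg_class_eq_iff[OF A] by blast
qed

lemma dg_add_class:
  assumes A: "A \<in> carrier_mat n n" and v: "v \<in> carrier_vec n" "v' \<in> carrier_vec n"
  shows "dg_add A (dg_class A v k) (dg_class A v' k') =
    dg_class A (At A ^\<^sub>m k' *\<^sub>v v + At A ^\<^sub>m k *\<^sub>v v') (k + k')"
  unfolding dg_add_def dg_class_def[of A _ "k + k'"]
proof (rule Image_eq_equiv_class[OF equiv_dg_rel[OF A]])
  let ?S = "{(At A ^\<^sub>m k1' *\<^sub>v v1 + At A ^\<^sub>m k1 *\<^sub>v v1', k1 + k1') | v1 k1 v1' k1'.
     (v1, k1) \<in> dg_class A v k \<and> (v1', k1') \<in> dg_class A v' k'}"
  show "(At A ^\<^sub>m k' *\<^sub>v v + At A ^\<^sub>m k *\<^sub>v v', k + k') \<in> ?S"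
    using mem_dg_class_iff[OF A] v by blast
  show "?S \<subseteq> dg_rel A `` {(At A ^\<^sub>m k' *\<^sub>v v + At A ^\<^sub>m k *\<^sub>v v', k + k')}"
  proof
    fix y assume "y \<in> ?S"
    then obtain v1 k1 v1' k1' where y: "y = (At A ^\<^sub>m k1' *\<^sub>v v1 + At A ^\<^sub>m k1 *\<^sub>v v1', k1 + k1')"
      and "(v1, k1) \<in> dg_class A v k" "(v1', k1') \<in> dg_class A v' k'" by blast
    then have c: "v1 \<in> carrier_vec n" "v1' \<in> carrier_vec n"
      and "dg_class A v1 k1 = dg_class A v k" "dg_class A v1' k1' = dg_class A v' k'"
      using mem_dg_class_iff[OF A] v by auto
    then have "dg_class A (At A ^\<^sub>m k1' *\<^sub>v v1 + At A ^\<^sub>m k1 *\<^sub>v v1') (k1 + k1') =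
        dg_class A (At A ^\<^sub>m k' *\<^sub>v v + At A ^\<^sub>m k *\<^sub>v v') (k + k')"
      using dg_class_add_eq[OF A v(1) c(1) v(2) c(2)] by blast
    then show "y \<in> dg_rel A `` {(At A ^\<^sub>m k' *\<^sub>v v + At A ^\<^sub>m k *\<^sub>v v', k + k')}"
      unfolding y using mem_dg_class_iff[OF A] A v c unfolding dg_class_def by auto
  qed
qed

lemma dim_group_mult [simp]: "x \<otimes>\<^bsub>dim_group A\<^esub> y = dg_add A x y"
  unfolding dim_group_def by simp

lemma dim_group_one: "A \<in> carrier_mat n n \<Longrightarrow> \<one>\<^bsub>dim_group A\<^esub> = dg_class A (0\<^sub>v n) 0"
  unfolding dim_group_def by simp

lemma group_dim_group:
  assumes A: "A \<in> carrier_mat n n"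
  shows "group (dim_group A)"
proof (rule groupI)
  have T: "At A \<in> carrier_mat n n" using A by simp
  fix x y z
  assume x: "x \<in> carrier (dim_group A)"
  then obtain v k where v: "v \<in> carrier_vec n" and x_def: "x = dg_class A v k"
    using A by (elim dim_group_cases)
  show "\<one>\<^bsub>dim_group A\<^esub> \<otimes>\<^bsub>dim_group A\<^esub> x = x"
    using A T v by (simp add: x_def dim_group_one dg_add_class)
  have neg: "At A ^\<^sub>m k *\<^sub>v - v + At A ^\<^sub>m k *\<^sub>v v = 0\<^sub>v n"
    using T v by (simp add: mult_mat_vec_uminus[of _ n n])
  have "dg_class A (- v) k \<otimes>\<^bsub>dim_group A\<^esub> x = dg_class A (0\<^sub>v n) (k + k)"
    using dg_add_class[OF A uminus_carrier_vec[THEN iffD2, OF v] v, of k k] by (simp add: x_def neg)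
  also have "\<dots> = \<one>\<^bsub>dim_group A\<^esub>"
    using dg_class_shift[OF A zero_carrier_vec, of "k + k" 0] A by (simp add: dim_group_one)
  finally show "\<exists>x'\<in>carrier (dim_group A). x' \<otimes>\<^bsub>dim_group A\<^esub> x = \<one>\<^bsub>dim_group A\<^esub>"
    using A v by (metis dg_class_carrier uminus_carrier_vec)
  assume y: "y \<in> carrier (dim_group A)"
  then obtain v' k' where v': "v' \<in> carrier_vec n" and y_def: "y = dg_class A v' k'"
    using A by (elim dim_group_cases)
  show "x \<otimes>\<^bsub>dim_group A\<^esub> y \<in> carrier (dim_group A)"
    using A T v v' by (simp add: x_def y_def dg_add_class)
  assume "z \<in> carrier (dim_group A)"
  then obtain v'' k'' where v'': "v'' \<in> carrier_vec n" and z_def: "z = dg_class A v'' k''"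
    using A by (elim dim_group_cases)
  show "x \<otimes>\<^bsub>dim_group A\<^esub> y \<otimes>\<^bsub>dim_group A\<^esub> z = x \<otimes>\<^bsub>dim_group A\<^esub> (y \<otimes>\<^bsub>dim_group A\<^esub> z)"
  proof -
    have "At A ^\<^sub>m k'' *\<^sub>v (At A ^\<^sub>m k' *\<^sub>v v + At A ^\<^sub>m k *\<^sub>v v') + At A ^\<^sub>m (k + k') *\<^sub>v v'' =
        At A ^\<^sub>m (k' + k'') *\<^sub>v v + At A ^\<^sub>m k *\<^sub>v (At A ^\<^sub>m k'' *\<^sub>v v' + At A ^\<^sub>m k' *\<^sub>v v'')"
      using T v v' v'' by (simp add: pow_mat_mult_add_vec add.commute assoc_add_vec[of _ n])
    then show ?thesis using A T v v' v'' by (simp add: x_def y_def z_def dg_add_class add.assoc)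
  qed
qed (use A in \<open>simp add: dim_group_one\<close>)

lemma dg_class_level_hom:
  assumes B: "B \<in> carrier_mat m m" and M: "M \<in> carrier_mat m n"
  shows "(\<lambda>v. dg_class B (M *\<^sub>v v) K) \<in> hom (monoid_vec TYPE(int) n) (dim_group B)"
proof (rule homI)
  fix v w :: "int vec"
  assume "v \<in> carrier (monoid_vec TYPE(int) n)" "w \<in> carrier (monoid_vec TYPE(int) n)"
  then have v: "v \<in> carrier_vec n" "w \<in> carrier_vec n" by (simp_all add: monoid_vec_simps)
  then show "dg_class B (M *\<^sub>v v) K \<in> carrier (dim_group B)" using B M by simp
  have "dg_class B (M *\<^sub>v (v + w)) K = dg_class B (At B ^\<^sub>m K *\<^sub>v (M *\<^sub>v (v + w))) (K + K)"
    using dg_class_shift[OF B, of "M *\<^sub>v (v + w)"] M v by simp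
  also have "\<dots> = dg_class B (M *\<^sub>v v) K \<otimes>\<^bsub>dim_group B\<^esub> dg_class B (M *\<^sub>v w) K"
    using B M v by (simp add: dg_add_class mult_add_distrib_mat_vec[of _ m n] mult_add_distrib_mat_vec[of _ m m])
  finally show "dg_class B (M *\<^sub>v (v \<otimes>\<^bsub>monoid_vec TYPE(int) n\<^esub> w)) K =
      dg_class B (M *\<^sub>v v) K \<otimes>\<^bsub>dim_group B\<^esub> dg_class B (M *\<^sub>v w) K"
    by (simp add: monoid_vec_simps)
qed

lemma dg_class_level_zero_hom:
  assumes A: "A \<in> carrier_mat n n"
  shows "(\<lambda>v. dg_class A v 0) \<in> hom (monoid_vec TYPE(int) n) (dim_group A)"
proof (rule group.hom_restrict[OF comm_group.axioms(2)[OF comm_group_vec]])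
  show "(\<lambda>v. dg_class A (1\<^sub>m n *\<^sub>v v) 0) \<in> hom (monoid_vec TYPE(int) n) (dim_group A)"
    using dg_class_level_hom[OF A one_carrier_mat] .
qed (simp add: monoid_vec_simps)

lemma dg_map_hom:
  assumes A: "A \<in> carrier_mat n n" and B: "B \<in> carrier_mat m m" and M: "M \<in> carrier_mat m n"
    and MT: "M * At A = At B * M"
  shows "dg_map B M K \<in> hom (dim_group A) (dim_group B)"
proof (rule homI)
  have TA: "At A \<in> carrier_mat n n" and TB: "At B \<in> carrier_mat m m" using A B by simp_all
  fix X Y assume X: "X \<in> carrier (dim_group A)" and Y: "Y \<in> carrier (dim_group A)"
  obtain v j where v: "v \<in> carrier_vec n" and X_def: "X = dg_class A v j"
    using A X by (elim dim_group_cases)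
  obtain v' j' where v': "v' \<in> carrier_vec n" and Y_def: "Y = dg_class A v' j'"
    using A Y by (elim dim_group_cases)
  show "dg_map B M K X \<in> carrier (dim_group B)"
    using A B M MT v by (simp add: X_def dg_map_class)
  let ?w = "At A ^\<^sub>m j' *\<^sub>v v + At A ^\<^sub>m j *\<^sub>v v'"
  have w: "?w \<in> carrier_vec n" using TA v v' by simp
  have "At B ^\<^sub>m K *\<^sub>v (M *\<^sub>v ?w) = M *\<^sub>v (At A ^\<^sub>m (K + j') *\<^sub>v v + At A ^\<^sub>m (K + j) *\<^sub>v v')"
    using intertwining_pow_mat_vec[OF M TA TB MT w] pow_mat_mult_add_vec[OF TA v v'] by simp
  also have "\<dots> = At B ^\<^sub>m (j' + K) *\<^sub>v (M *\<^sub>v v) + At B ^\<^sub>m (j + K) *\<^sub>v (M *\<^sub>v v')"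
    using M TA v v' by (simp add: mult_add_distrib_mat_vec[of _ m n] add.commute
        intertwining_pow_mat_vec[OF M TA TB MT])
  finally have "At B ^\<^sub>m K *\<^sub>v (M *\<^sub>v ?w) =
      At B ^\<^sub>m (j' + K) *\<^sub>v (M *\<^sub>v v) + At B ^\<^sub>m (j + K) *\<^sub>v (M *\<^sub>v v')" .
  then have "dg_class B (M *\<^sub>v ?w) (j + j' + K) =
      dg_class B (At B ^\<^sub>m (j' + K) *\<^sub>v (M *\<^sub>v v) + At B ^\<^sub>m (j + K) *\<^sub>v (M *\<^sub>v v')) ((j + K) + (j' + K))"
    using dg_class_shift[OF B, of "M *\<^sub>v ?w" K "j + j' + K"] M w by (simp add: ac_simps)
  then show "dg_map B M K (X \<otimes>\<^bsub>dim_group A\<^esub> Y) = dg_map B M K X \<otimes>\<^bsub>dim_group B\<^esub> dg_map B M K Y"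
    using A B M MT v v' w by (simp add: X_def Y_def dg_add_class dg_map_class)
qed

lemma dg_pos_iff:
  assumes "A \<in> carrier_mat n n"
  shows "X \<in> dg_pos A \<longleftrightarrow> (\<exists>u k. u \<in> carrier_vec n \<and> X = dg_class A (map_vec int u) k)"
proof -
  have nonneg: "(\<exists>v. v \<in> carrier_vec n \<and> (\<forall>i < n. v $ i \<ge> 0) \<and> P v) \<longleftrightarrow>
      (\<exists>u. u \<in> carrier_vec n \<and> P (map_vec int u))" for P :: "int vec \<Rightarrow> bool"
  proof
    assume "\<exists>v. v \<in> carrier_vec n \<and> (\<forall>i < n. v $ i \<ge> 0) \<and> P v"
    then obtain v where "v \<in> carrier_vec n" "\<forall>i < n. v $ i \<ge> 0" "P v" by blast
    moreover from this have "v = map_vec int (map_vec nat v)" by (intro eq_vecI) auto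
    ultimately show "\<exists>u. u \<in> carrier_vec n \<and> P (map_vec int u)" by (metis map_carrier_vec)
  next
    assume "\<exists>u. u \<in> carrier_vec n \<and> P (map_vec int u)"
    then obtain u where "u \<in> carrier_vec n" "P (map_vec int u)" by blast
    then show "\<exists>v. v \<in> carrier_vec n \<and> (\<forall>i < n. v $ i \<ge> 0) \<and> P v"
      by (intro exI[of _ "map_vec int u"]) auto
  qed
  have "X \<in> dg_pos A \<longleftrightarrow> (\<exists>k v. v \<in> carrier_vec n \<and> (\<forall>i < n. v $ i \<ge> 0) \<and> X = dg_class A v k)"
    unfolding dg_pos_def using assms by auto
  also have "\<dots> \<longleftrightarrow> (\<exists>k u. u \<in> carrier_vec n \<and> X = dg_class A (map_vec int u) k)"
    by (simp only: nonneg)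
  finally show ?thesis by blast
qed

lemma dg_pos_subset_carrier: "A \<in> carrier_mat n n \<Longrightarrow> dg_pos A \<subseteq> carrier (dim_group A)"
  by (auto simp: dg_pos_iff)

lemma dg_pos_eventually_level:
  assumes B: "B \<in> carrier_mat m m" and X: "X \<in> dg_pos B"
  shows "eventually (\<lambda>K. \<exists>u \<in> carrier_vec m. X = dg_class B (map_vec int u) K) sequentially"
proof -
  obtain u k where u: "u \<in> carrier_vec m" and X_def: "X = dg_class B (map_vec int u) k"
    using B X dg_pos_iff by blast
  show ?thesis
  proof (rule eventually_sequentiallyI)
    fix K assume "k \<le> K"
    then have "X = dg_class B (At (B ^\<^sub>m (K - k)) *\<^sub>v map_vec int u) K"
      using dg_class_shift[OF B, of "map_vec int u" "K - k" k] B u by (simp add: X_def At_pow_mat)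
    then show "\<exists>u \<in> carrier_vec m. X = dg_class B (map_vec int u) K"
      using At_mult_of_nat_vec[of "B ^\<^sub>m (K - k)" m m u] B u
        transpose_mult_vec_carrier[OF pow_carrier_mat[OF B] u]
      by (intro bexI[of _ "(B ^\<^sub>m (K - k))\<^sup>T *\<^sub>v u"]) auto
  qed
qed

section \<open>From shift equivalences to isomorphisms\<close>

definition unital_dim_data_iso ::
    "nat mat \<Rightarrow> nat mat \<Rightarrow> ((int vec \<times> nat) set \<Rightarrow> (int vec \<times> nat) set) \<Rightarrow> bool" where
  "unital_dim_data_iso A B \<Theta> \<longleftrightarrow> \<Theta> \<in> iso (dim_group A) (dim_group B) \<and> \<Theta> ` dg_pos A = dg_pos B \<and>
    (\<forall>X \<in> carrier (dim_group A). \<Theta> (dg_theta A X) = dg_theta B (\<Theta> X)) \<and> \<Theta> (dg_unit A) = dg_unit B"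

lemma shift_equiv_via_iff:
  assumes A: "A \<in> carrier_mat n n" and B: "B \<in> carrier_mat m m"
  shows "shift_equiv_via A B l R S \<longleftrightarrow> 1 \<le> l \<and> R \<in> carrier_mat n m \<and> S \<in> carrier_mat m n \<and>
    At S * At R = At A ^\<^sub>m l \<and> At R * At S = At B ^\<^sub>m l \<and>
    At R * At A = At B * At R \<and> At S * At B = At A * At S"
proof -
  have "(A ^\<^sub>m l = R * S \<longleftrightarrow> At S * At R = At A ^\<^sub>m l) \<and> (B ^\<^sub>m l = S * R \<longleftrightarrow> At R * At S = At B ^\<^sub>m l) \<and>
      (A * R = R * B \<longleftrightarrow> At R * At A = At B * At R) \<and> (B * S = S * A \<longleftrightarrow> At S * At B = At A * At S)"
    if R: "R \<in> carrier_mat n m" and S: "S \<in> carrier_mat m n"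
    using A B R S by (auto simp flip: At_inject simp: At_mult At_pow_mat)
  then show ?thesis unfolding shift_equiv_via_def using A B by auto
qed

lemma unital_SE_iff:
  assumes A: "A \<in> carrier_mat n n" and B: "B \<in> carrier_mat m m" and R: "R \<in> carrier_mat n m"
  shows "unital_SE A B R \<longleftrightarrow> (\<exists>k. dg_class B (At R *\<^sub>v one_vec n) k = dg_unit B)"
proof -
  have Ru: "R\<^sup>T *\<^sub>v one_vec n \<in> carrier_vec m"
    using transpose_mult_vec_carrier[OF R one_vec_carrier] .
  have "B\<^sup>T ^\<^sub>m p *\<^sub>v (R\<^sup>T *\<^sub>v one_vec n) = B\<^sup>T ^\<^sub>m q *\<^sub>v one_vec m \<longleftrightarrow>
      At B ^\<^sub>m p *\<^sub>v (At R *\<^sub>v one_vec n) = At B ^\<^sub>m q *\<^sub>v one_vec m" for p q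
    using map_vec_int_transpose_pow_mult[OF B Ru, of p] map_vec_int_transpose_pow_mult[OF B one_vec_carrier, of q]
      At_mult_of_nat_vec[OF R one_vec_carrier] of_nat_int.vec_hom_inj
    by (metis map_vec_int_one_vec)
  moreover have "At R *\<^sub>v one_vec n \<in> carrier_vec m" using R by simp
  ultimately show ?thesis
    unfolding unital_SE_def dg_unit_def using A B dg_class_eq_iff[OF B] by auto
qed

lemma dg_map_dg_theta:
  assumes A: "A \<in> carrier_mat n n" and B: "B \<in> carrier_mat m m" and M: "M \<in> carrier_mat m n"
    and MT: "M * At A = At B * M" and X: "X \<in> carrier (dim_group A)"
  shows "dg_map B M K (dg_theta A X) = dg_theta B (dg_map B M K X)"
proof -
  obtain v j where v: "v \<in> carrier_vec n" and X_def: "X = dg_class A v j"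
    using A X by (elim dim_group_cases)
  have "M *\<^sub>v (At A *\<^sub>v v) = At B *\<^sub>v (M *\<^sub>v v)"
    using MT M A B v by (metis assoc_mult_mat_vec At_carrier_mat)
  then show ?thesis using A B M MT v
    by (simp add: X_def dg_theta_class dg_map_class mult_mat_vec_carrier[OF At_carrier_mat[OF A]])
qed

lemma inj_on_dg_map:
  assumes A: "A \<in> carrier_mat n n" and B: "B \<in> carrier_mat m m"
    and M: "M \<in> carrier_mat m n" and N: "N \<in> carrier_mat n m"
    and MT: "M * At A = At B * M" and NM: "N * M = At A ^\<^sub>m l"
  shows "inj_on (dg_map B M K) (carrier (dim_group A))"
proof (rule inj_onI)
  have TA: "At A \<in> carrier_mat n n" and TB: "At B \<in> carrier_mat m m" using A B by simp_all
  fix X Y assume "X \<in> carrier (dim_group A)" "Y \<in> carrier (dim_group A)"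
    and eq: "dg_map B M K X = dg_map B M K Y"
  then obtain v j v' j' where v: "v \<in> carrier_vec n" "v' \<in> carrier_vec n"
    and XY: "X = dg_class A v j" "Y = dg_class A v' j'"
    using A by (metis dim_group_cases)
  obtain p where "At B ^\<^sub>m (p + (j' + K)) *\<^sub>v (M *\<^sub>v v) = At B ^\<^sub>m (p + (j + K)) *\<^sub>v (M *\<^sub>v v')"
    using eq dg_class_eq_iff[OF B] A B M MT v by (auto simp: XY dg_map_class)
  then have "M *\<^sub>v (At A ^\<^sub>m (p + (j' + K)) *\<^sub>v v) = M *\<^sub>v (At A ^\<^sub>m (p + (j + K)) *\<^sub>v v')"
    using intertwining_pow_mat_vec[OF M TA TB MT] v by simp
  then have "(N * M) *\<^sub>v (At A ^\<^sub>m (p + (j' + K)) *\<^sub>v v) = (N * M) *\<^sub>v (At A ^\<^sub>m (p + (j + K)) *\<^sub>v v')"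
    using M N TA v by (simp add: assoc_mult_mat_vec[of _ n m _ n])
  then have "At A ^\<^sub>m ((l + p + K) + j') *\<^sub>v v = At A ^\<^sub>m ((l + p + K) + j) *\<^sub>v v'"
    using TA v by (simp add: NM pow_mat_mult_vec ac_simps)
  then show "X = Y" using XY dg_class_eq_iff[OF A v] by blast
qed

lemma dg_map_preimage:
  assumes A: "A \<in> carrier_mat n n" and B: "B \<in> carrier_mat m m"
    and M: "M \<in> carrier_mat m n" and N: "N \<in> carrier_mat n m"
    and MT: "M * At A = At B * M" and MN: "M * N = At B ^\<^sub>m l" and w: "w \<in> carrier_vec m"
  shows "dg_map B M K (dg_class A (N *\<^sub>v (At B ^\<^sub>m K *\<^sub>v w)) (i + l)) = dg_class B w i"
proof -
  have TB: "At B \<in> carrier_mat m m" using B by simp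
  have "M *\<^sub>v (N *\<^sub>v (At B ^\<^sub>m K *\<^sub>v w)) = At B ^\<^sub>m (K + l) *\<^sub>v w"
    using M N TB w by (simp add: assoc_mult_mat_vec[of _ m n _ m, symmetric] MN pow_mat_mult_vec add.commute)
  then show ?thesis
    using dg_class_shift[OF B w, of "K + l" i] A B M N MT TB w
    by (simp add: dg_map_class ac_simps mult_mat_vec_carrier[OF N])
qed

lemma dg_map_image_dg_pos_subset:
  assumes A: "A \<in> carrier_mat n n" and B: "B \<in> carrier_mat m m" and R: "R \<in> carrier_mat n m"
    and RA: "At R * At A = At B * At R"
  shows "dg_map B (At R) K ` dg_pos A \<subseteq> dg_pos B"
proof (rule image_subsetI)
  fix X assume "X \<in> dg_pos A"
  then obtain u j where u: "u \<in> carrier_vec n" and X: "X = dg_class A (map_vec int u) j"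
    unfolding dg_pos_iff[OF A] by blast
  then have "dg_map B (At R) K X = dg_class B (map_vec int (R\<^sup>T *\<^sub>v u)) (j + K)"
    using A B R RA by (simp add: dg_map_class At_mult_of_nat_vec[OF R u])
  then show "dg_map B (At R) K X \<in> dg_pos B"
    unfolding dg_pos_iff[OF B] using transpose_mult_vec_carrier[OF R u] by blast
qed

lemma shift_equivalence_dg_map_iso:
  assumes A: "A \<in> carrier_mat n n" and B: "B \<in> carrier_mat m m"
    and R: "R \<in> carrier_mat n m" and S: "S \<in> carrier_mat m n"
    and SR: "At S * At R = At A ^\<^sub>m l" and RS: "At R * At S = At B ^\<^sub>m l"
    and RA: "At R * At A = At B * At R"
  shows "dg_map B (At R) K \<in> iso (dim_group A) (dim_group B)"
proof -
  have Rt: "At R \<in> carrier_mat m n" and St: "At S \<in> carrier_mat n m" using R S by simp_all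
  have hom: "dg_map B (At R) K \<in> hom (dim_group A) (dim_group B)"
    by (rule dg_map_hom[OF A B Rt RA])
  have "carrier (dim_group B) \<subseteq> dg_map B (At R) K ` carrier (dim_group A)"
  proof
    fix Y assume "Y \<in> carrier (dim_group B)"
    then obtain w i where w: "w \<in> carrier_vec m" and Y: "Y = dg_class B w i"
      using B by (elim dim_group_cases)
    then show "Y \<in> dg_map B (At R) K ` carrier (dim_group A)"
      using dg_map_preimage[OF A B Rt St RA RS w, of K i, symmetric] A B
      by (simp add: mult_mat_vec_carrier[OF St])
  qed
  with hom show ?thesis
    using inj_on_dg_map[OF A B Rt St RA SR] hom_carrier[OF hom]
    by (auto simp: iso_def bij_betw_def)
qed

lemma shift_equivalence_dg_map_dg_pos:
  assumes A: "A \<in> carrier_mat n n" and B: "B \<in> carrier_mat m m"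
    and R: "R \<in> carrier_mat n m" and S: "S \<in> carrier_mat m n"
    and RS: "At R * At S = At B ^\<^sub>m l" and RA: "At R * At A = At B * At R"
  shows "dg_map B (At R) K ` dg_pos A = dg_pos B"
proof
  show "dg_map B (At R) K ` dg_pos A \<subseteq> dg_pos B"
    by (rule dg_map_image_dg_pos_subset[OF A B R RA])
  show "dg_pos B \<subseteq> dg_map B (At R) K ` dg_pos A"
  proof
    fix Y assume "Y \<in> dg_pos B"
    then obtain u i where u: "u \<in> carrier_vec m" and Y: "Y = dg_class B (map_vec int u) i"
      unfolding dg_pos_iff[OF B] by blast
    let ?u = "S\<^sup>T *\<^sub>v ((B ^\<^sub>m K)\<^sup>T *\<^sub>v u)"
    have u_K: "(B ^\<^sub>m K)\<^sup>T *\<^sub>v u \<in> carrier_vec m"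
      using transpose_mult_vec_carrier[OF pow_carrier_mat[OF B] u] .
    have "At S *\<^sub>v (At B ^\<^sub>m K *\<^sub>v map_vec int u) = map_vec int ?u"
      using At_mult_of_nat_vec[OF pow_carrier_mat[OF B] u, of K] At_mult_of_nat_vec[OF S u_K]
      by (simp add: At_pow_mat[OF B])
    then have "Y = dg_map B (At R) K (dg_class A (map_vec int ?u) (i + l))"
      using dg_map_preimage[OF A B _ _ RA RS, of "map_vec int u" K i] R S u by (simp add: Y)
    moreover have "dg_class A (map_vec int ?u) (i + l) \<in> dg_pos A"
      unfolding dg_pos_iff[OF A] using transpose_mult_vec_carrier[OF S u_K] by blast
    ultimately show "Y \<in> dg_map B (At R) K ` dg_pos A" by blast
  qed
qed

section \<open>From isomorphisms to shift equivalences\<close>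

lemma positive_hom_level_zero:
  assumes A: "A \<in> carrier_mat n n" and B: "B \<in> carrier_mat m m"
    and hom: "\<Theta> \<in> hom (dim_group A) (dim_group B)" and pos: "\<Theta> ` dg_pos A \<subseteq> dg_pos B"
  obtains R K where "R \<in> carrier_mat n m"
    and "\<And>v. v \<in> carrier_vec n \<Longrightarrow> \<Theta> (dg_class A v 0) = dg_class B (At R *\<^sub>v v) K"
proof -
  have "\<Theta> (dg_class A (unit_vec n i) 0) \<in> dg_pos B" if "i < n" for i
  proof -
    have "map_vec int (unit_vec n i) = unit_vec n i" by (intro eq_vecI) (auto simp: unit_vec_def)
    then have "dg_class A (unit_vec n i) 0 \<in> dg_pos A"
      using dg_pos_iff[OF A] unit_vec_carrier by metis
    then show ?thesis using pos by blast
  qed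
  \<comment> \<open>the \<open>\<nat>\<close>-representatives at a common level K become the rows of R\<close>
  then have "eventually (\<lambda>K. \<forall>i\<in>{..<n}. \<exists>u \<in> carrier_vec m.
      \<Theta> (dg_class A (unit_vec n i) 0) = dg_class B (map_vec int u) K) sequentially"
    by (intro eventually_ball_finite ballI dg_pos_eventually_level[OF B]) auto
  then obtain K where "\<forall>i<n. \<exists>u \<in> carrier_vec m. \<Theta> (dg_class A (unit_vec n i) 0) = dg_class B (map_vec int u) K"
    unfolding eventually_sequentially by auto
  then obtain U where U: "\<And>i. i < n \<Longrightarrow> U i \<in> carrier_vec m"
    and U_eq: "\<And>i. i < n \<Longrightarrow> \<Theta> (dg_class A (unit_vec n i) 0) = dg_class B (map_vec int (U i)) K"
    by metis
  define R where "R = mat n m (\<lambda>(i, j). U i $ j)"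
  have R: "R \<in> carrier_mat n m" unfolding R_def by simp
  have "At R *\<^sub>v unit_vec n i = map_vec int (U i)" if "i < n" for i
  proof -
    have "row R i = U i" unfolding R_def using U[OF that] that by (intro eq_vecI) auto
    then show ?thesis using At_mult_unit_vec[OF R that] by simp
  qed
  then have units: "\<Theta> (dg_class A (unit_vec n i) 0) = dg_class B (At R *\<^sub>v unit_vec n i) K" if "i < n" for i
    using U_eq that by simp
  have "\<Theta> (dg_class A v 0) = dg_class B (At R *\<^sub>v v) K" if "v \<in> carrier_vec n" for v
    using hom_int_vecs_eqI[OF group_dim_group[OF B] hom_compose[OF dg_class_level_zero_hom[OF A] hom]
        dg_class_level_hom[OF B At_carrier_mat[OF R]] _ that] units by simp
  then show ?thesis using R that by blast
qed

lemma dg_hom_level_zero_imp_all_levels: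
  assumes A: "A \<in> carrier_mat n n" and B: "B \<in> carrier_mat m m" and M: "M \<in> carrier_mat m n"
    and carrier: "\<And>X. X \<in> carrier (dim_group A) \<Longrightarrow> \<Theta> X \<in> carrier (dim_group B)"
    and commute: "\<And>X. X \<in> carrier (dim_group A) \<Longrightarrow> \<Theta> (dg_theta A X) = dg_theta B (\<Theta> X)"
    and level_zero: "\<And>v. v \<in> carrier_vec n \<Longrightarrow> \<Theta> (dg_class A v 0) = dg_class B (M *\<^sub>v v) K"
    and v: "v \<in> carrier_vec n"
  shows "\<Theta> (dg_class A v j) = dg_class B (M *\<^sub>v v) (j + K)"
proof (rule inj_onD[OF inj_on_dg_theta_pow[OF B]])
  have Mv: "M *\<^sub>v v \<in> carrier_vec m" using M v by simp
  have "(dg_theta B ^^ j) (\<Theta> (dg_class A v j)) = \<Theta> ((dg_theta A ^^ j) (dg_class A v j))"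
    using funpow_intertwine[of "dg_theta A" "carrier (dim_group A)" \<Theta> "dg_theta B"] A v commute
    by (simp add: dg_theta_carrier image_subsetI)
  also have "\<dots> = \<Theta> (dg_class A v 0)"
    using dg_class_shift[OF A v, of j 0] A v by (simp add: dg_theta_pow_class)
  also have "\<dots> = (dg_theta B ^^ j) (dg_class B (M *\<^sub>v v) (j + K))"
    using level_zero[OF v] dg_class_shift[OF B Mv, of j K] B Mv by (simp add: dg_theta_pow_class add.commute)
  finally show "(dg_theta B ^^ j) (\<Theta> (dg_class A v j)) = (dg_theta B ^^ j) (dg_class B (M *\<^sub>v v) (j + K))" .
qed (use A B M carrier v in simp_all)

lemma positive_hom_normal_form:
  assumes A: "A \<in> carrier_mat n n" and B: "B \<in> carrier_mat m m"
    and hom: "\<Theta> \<in> hom (dim_group A) (dim_group B)" and pos: "\<Theta> ` dg_pos A \<subseteq> dg_pos B"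
    and commute: "\<forall>X \<in> carrier (dim_group A). \<Theta> (dg_theta A X) = dg_theta B (\<Theta> X)"
  obtains R K where "R \<in> carrier_mat n m" and "At R * At A = At B * At R"
    and "\<And>v j. v \<in> carrier_vec n \<Longrightarrow> \<Theta> (dg_class A v j) = dg_class B (At R *\<^sub>v v) (j + K)"
proof -
  have TA: "At A \<in> carrier_mat n n" and TB: "At B \<in> carrier_mat m m" using A B by simp_all
  obtain R0 K0 where R0: "R0 \<in> carrier_mat n m"
    and level_zero: "\<And>v. v \<in> carrier_vec n \<Longrightarrow> \<Theta> (dg_class A v 0) = dg_class B (At R0 *\<^sub>v v) K0"
    using positive_hom_level_zero[OF A B hom pos] by blast
  have R0t: "At R0 \<in> carrier_mat m n" using R0 by simp
  have levels: "\<Theta> (dg_class A v j) = dg_class B (At R0 *\<^sub>v v) (j + K0)" if "v \<in> carrier_vec n" for v j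
    using dg_hom_level_zero_imp_all_levels[OF A B R0t hom_in_carrier[OF hom] _ level_zero that] commute
    by blast
  have "dg_class B ((At R0 * At A) *\<^sub>v unit_vec n i) K0 = dg_class B ((At B * At R0) *\<^sub>v unit_vec n i) K0"
    if "i < n" for i
  proof -
    have "\<Theta> (dg_theta A (dg_class A (unit_vec n i) 0)) = dg_theta B (\<Theta> (dg_class A (unit_vec n i) 0))"
      using commute A by simp
    then show ?thesis
      using A B TA TB R0t
      by (simp add: dg_theta_class level_zero assoc_mult_mat_vec[of _ m n _ n] assoc_mult_mat_vec[of _ m m _ n])
  qed
  \<comment> \<open>R0 intertwines only up to a power of \<open>B\<^sup>t\<close>, which is absorbed into R below\<close>
  then obtain p where p: "At B ^\<^sub>m (p + K0) * (At R0 * At A) = At B ^\<^sub>m (p + K0) * (At B * At R0)"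
    using dg_class_unit_vecs_eq_imp_eventually[OF B, of "At R0 * At A" n "At B * At R0" K0 K0] TA TB R0t
    unfolding eventually_sequentially by auto
  define P where "P = p + K0"
  define R where "R = R0 * B ^\<^sub>m P"
  have R: "R \<in> carrier_mat n m" unfolding R_def using R0 B by simp
  have Rt: "At R = At B ^\<^sub>m P * At R0"
    unfolding R_def using At_mult[OF R0 pow_carrier_mat[OF B]] At_pow_mat[OF B] by simp
  have BP: "At B ^\<^sub>m P \<in> carrier_mat m m" using TB by simp
  have intertwines: "At R * At A = At B * At R"
    unfolding Rt using intertwining_mult_pow_mat[OF R0t TA TB] p unfolding P_def .
  have "\<Theta> (dg_class A v j) = dg_class B (At R *\<^sub>v v) (j + (K0 + P))" if v: "v \<in> carrier_vec n" for v j
    using levels[OF v, of j] dg_class_shift[OF B, of "At R0 *\<^sub>v v" P "j + K0"] R0t BP v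
    by (simp add: Rt assoc_mult_mat_vec[of _ m m _ n] add.assoc)
  then show ?thesis using that R intertwines by blast
qed

lemma unital_dim_data_iso_inv:
  assumes A: "A \<in> carrier_mat n n" and \<Theta>: "unital_dim_data_iso A B \<Theta>"
  shows "unital_dim_data_iso B A (inv_into (carrier (dim_group A)) \<Theta>)"
proof -
  have iso: "\<Theta> \<in> iso (dim_group A) (dim_group B)" and pos: "\<Theta> ` dg_pos A = dg_pos B"
    and commute: "\<forall>X \<in> carrier (dim_group A). \<Theta> (dg_theta A X) = dg_theta B (\<Theta> X)"
    and unit: "\<Theta> (dg_unit A) = dg_unit B"
    using \<Theta> unfolding unital_dim_data_iso_def by blast+
  have bij: "bij_betw \<Theta> (carrier (dim_group A)) (carrier (dim_group B))"
    using iso by (simp add: iso_def)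
  have "inv_into (carrier (dim_group A)) \<Theta> \<in> iso (dim_group B) (dim_group A)"
    by (rule group.iso_set_sym[OF group_dim_group[OF A] iso])
  moreover have "inv_into (carrier (dim_group A)) \<Theta> ` dg_pos B = dg_pos A"
    unfolding pos[symmetric] using bij dg_pos_subset_carrier[OF A] by (simp add: bij_betw_def)
  moreover have "\<forall>Y \<in> carrier (dim_group B). inv_into (carrier (dim_group A)) \<Theta> (dg_theta B Y) =
      dg_theta A (inv_into (carrier (dim_group A)) \<Theta> Y)"
    using inv_into_intertwine[OF bij _ commute] dg_theta_carrier[OF A] by blast
  moreover have "inv_into (carrier (dim_group A)) \<Theta> (dg_unit B) = dg_unit A"
    using bij_betw_inv_into_left[OF bij] A unfolding unit[symmetric] by (simp add: dg_unit_def)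
  ultimately show ?thesis unfolding unital_dim_data_iso_def by blast
qed

lemma unital_dim_data_iso_normal_form:
  assumes A: "A \<in> carrier_mat n n" and B: "B \<in> carrier_mat m m" and "unital_dim_data_iso A B \<Theta>"
  obtains R K where "R \<in> carrier_mat n m" and "At R * At A = At B * At R"
    and "\<And>v j. v \<in> carrier_vec n \<Longrightarrow> \<Theta> (dg_class A v j) = dg_class B (At R *\<^sub>v v) (j + K)"
proof -
  have "\<Theta> \<in> hom (dim_group A) (dim_group B)" and "\<Theta> ` dg_pos A \<subseteq> dg_pos B"
    and "\<forall>X \<in> carrier (dim_group A). \<Theta> (dg_theta A X) = dg_theta B (\<Theta> X)"
    using assms(3) iso_imp_homomorphism unfolding unital_dim_data_iso_def by blast+
  from positive_hom_normal_form[OF A B this] that show ?thesis by blast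
qed

lemma dg_class_maps_inverse_imp_eventually:
  assumes A: "A \<in> carrier_mat n n" and B: "B \<in> carrier_mat m m"
    and R: "R \<in> carrier_mat n m" and S: "S \<in> carrier_mat m n"
    and \<Phi>: "\<And>v j. v \<in> carrier_vec n \<Longrightarrow> \<Phi> (dg_class A v j) = dg_class B (At R *\<^sub>v v) (j + K1)"
    and \<Psi>: "\<And>w j. w \<in> carrier_vec m \<Longrightarrow> \<Psi> (dg_class B w j) = dg_class A (At S *\<^sub>v w) (j + K2)"
    and inverse: "\<And>v. v \<in> carrier_vec n \<Longrightarrow> \<Psi> (\<Phi> (dg_class A v 0)) = dg_class A v 0"
  shows "eventually (\<lambda>p. At A ^\<^sub>m p * (At S * At R) = At A ^\<^sub>m (p + (K1 + K2))) sequentially"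
proof -
  have "dg_class A ((At S * At R) *\<^sub>v unit_vec n i) (K1 + K2) = dg_class A (1\<^sub>m n *\<^sub>v unit_vec n i) 0"
    if "i < n" for i
    using inverse[of "unit_vec n i"] R S by (simp add: \<Phi> \<Psi> assoc_mult_mat_vec[of _ n m _ n])
  then show ?thesis
    using dg_class_unit_vecs_eq_imp_eventually[OF A, of "At S * At R" n "1\<^sub>m n" "K1 + K2" 0]
      mult_carrier_mat[OF At_carrier_mat[OF S] At_carrier_mat[OF R]] A
    by simp
qed

lemma eventual_inverses_imp_shift_equiv_via:
  assumes A: "A \<in> carrier_mat n n" and B: "B \<in> carrier_mat m m"
    and R: "R \<in> carrier_mat n m" and S: "S \<in> carrier_mat m n"
    and RA: "At R * At A = At B * At R" and SB: "At S * At B = At A * At S"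
    and SR: "At A ^\<^sub>m Q * (At S * At R) = At A ^\<^sub>m (Q + K)"
    and RS: "At B ^\<^sub>m Q * (At R * At S) = At B ^\<^sub>m (Q + K)"
    and Q: "1 \<le> Q"
  shows "shift_equiv_via A B (Q + K) R (S * A ^\<^sub>m Q)"
proof -
  have TA: "At A \<in> carrier_mat n n" and TB: "At B \<in> carrier_mat m m" using A B by simp_all
  have Rt: "At R \<in> carrier_mat m n" and St: "At S \<in> carrier_mat n m" using R S by simp_all
  have AQ: "At A ^\<^sub>m Q \<in> carrier_mat n n" using TA by simp
  have S': "S * A ^\<^sub>m Q \<in> carrier_mat m n" using S A by simp
  have S't: "At (S * A ^\<^sub>m Q) = At A ^\<^sub>m Q * At S"
    using At_mult[OF S pow_carrier_mat[OF A]] At_pow_mat[OF A] by simp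
  have "At (S * A ^\<^sub>m Q) * At R = At A ^\<^sub>m (Q + K)"
    unfolding S't using assoc_mult_mat[OF AQ St Rt] SR by simp
  moreover have "At R * At (S * A ^\<^sub>m Q) = At B ^\<^sub>m (Q + K)"
  proof -
    have "At R * (At A ^\<^sub>m Q * At S) = (At R * At A ^\<^sub>m Q) * At S"
      using assoc_mult_mat[OF Rt AQ St] by simp
    also have "\<dots> = (At B ^\<^sub>m Q * At R) * At S" using intertwining_pow_mat[OF Rt TA TB RA] by simp
    also have "\<dots> = At B ^\<^sub>m (Q + K)" using assoc_mult_mat[OF pow_carrier_mat[OF TB] Rt St] RS by simp
    finally show ?thesis unfolding S't .
  qed
  moreover have "At (S * A ^\<^sub>m Q) * At B = At A * At (S * A ^\<^sub>m Q)"
  proof -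
    have "(At A ^\<^sub>m Q * At S) * At B = At A ^\<^sub>m Q * (At A * At S)"
      using assoc_mult_mat[OF AQ St TB] SB by simp
    also have "\<dots> = (At A * At A ^\<^sub>m Q) * At S"
      using assoc_mult_mat[OF AQ TA St] pow_mat_commute[OF TA, of Q] by simp
    also have "\<dots> = At A * (At A ^\<^sub>m Q * At S)" using assoc_mult_mat[OF TA AQ St] .
    finally show ?thesis unfolding S't .
  qed
  ultimately show ?thesis using shift_equiv_via_iff[OF A B] R S' RA Q by simp
qed

lemma unitally_shift_equivalent_imp_unital_dim_data_iso:
  assumes A: "A \<in> carrier_mat n n" and B: "B \<in> carrier_mat m m"
    and "unitally_shift_equivalent A B"
  shows "\<exists>\<Theta>. unital_dim_data_iso A B \<Theta>"
proof -
  obtain l R S where "shift_equiv_via A B l R S" and unital: "unital_SE A B R"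
    using assms(3) unfolding unitally_shift_equivalent_def by blast
  then have R: "R \<in> carrier_mat n m" and S: "S \<in> carrier_mat m n"
    and SR: "At S * At R = At A ^\<^sub>m l" and RS: "At R * At S = At B ^\<^sub>m l"
    and RA: "At R * At A = At B * At R"
    using shift_equiv_via_iff[OF A B] by auto
  obtain k where k: "dg_class B (At R *\<^sub>v one_vec n) k = dg_unit B"
    using unital unital_SE_iff[OF A B R] by blast
  have "dg_map B (At R) k (dg_unit A) = dg_unit B"
    using dg_map_class[OF A B At_carrier_mat[OF R] RA one_vec_carrier, where K = k and j = 0] A k
    by (simp add: dg_unit_def)
  moreover have "\<forall>X \<in> carrier (dim_group A). dg_map B (At R) k (dg_theta A X) = dg_theta B (dg_map B (At R) k X)"
    using dg_map_dg_theta[OF A B At_carrier_mat[OF R] RA] by blast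
  ultimately show ?thesis
    using shift_equivalence_dg_map_iso[OF A B R S SR RS RA, of k] shift_equivalence_dg_map_dg_pos[OF A B R S RS RA, of k]
    unfolding unital_dim_data_iso_def by blast
qed

lemma unital_dim_data_iso_imp_unitally_shift_equivalent:
  assumes A: "A \<in> carrier_mat n n" and B: "B \<in> carrier_mat m m"
    and \<Theta>_iso: "unital_dim_data_iso A B \<Theta>"
  shows "unitally_shift_equivalent A B"
proof -
  define \<Theta>' where "\<Theta>' = inv_into (carrier (dim_group A)) \<Theta>"
  have bij: "bij_betw \<Theta> (carrier (dim_group A)) (carrier (dim_group B))"
    using \<Theta>_iso by (simp add: unital_dim_data_iso_def iso_def)
  obtain R K1 where R: "R \<in> carrier_mat n m" and RA: "At R * At A = At B * At R"
    and \<Theta>: "\<And>v j. v \<in> carrier_vec n \<Longrightarrow> \<Theta> (dg_class A v j) = dg_class B (At R *\<^sub>v v) (j + K1)"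
    using unital_dim_data_iso_normal_form[OF A B \<Theta>_iso] by blast
  obtain S K2 where S: "S \<in> carrier_mat m n" and SB: "At S * At B = At A * At S"
    and \<Theta>': "\<And>w j. w \<in> carrier_vec m \<Longrightarrow> \<Theta>' (dg_class B w j) = dg_class A (At S *\<^sub>v w) (j + K2)"
    using unital_dim_data_iso_normal_form[OF B A unital_dim_data_iso_inv[OF A \<Theta>_iso]]
    unfolding \<Theta>'_def by blast
  have "eventually (\<lambda>p. At A ^\<^sub>m p * (At S * At R) = At A ^\<^sub>m (p + (K1 + K2))) sequentially"
    using dg_class_maps_inverse_imp_eventually[OF A B R S \<Theta> \<Theta>'] bij A
    unfolding \<Theta>'_def by (simp add: bij_betw_inv_into_left)
  moreover have "eventually (\<lambda>p. At B ^\<^sub>m p * (At R * At S) = At B ^\<^sub>m (p + (K1 + K2))) sequentially"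
    using dg_class_maps_inverse_imp_eventually[OF B A S R \<Theta>' \<Theta>] bij B
    unfolding \<Theta>'_def by (simp add: bij_betw_inv_into_right add.commute)
  ultimately have "eventually (\<lambda>p. 1 \<le> p \<and> At A ^\<^sub>m p * (At S * At R) = At A ^\<^sub>m (p + (K1 + K2)) \<and>
      At B ^\<^sub>m p * (At R * At S) = At B ^\<^sub>m (p + (K1 + K2))) sequentially"
    by (intro eventually_conj eventually_ge_at_top)
  then obtain Q where "1 \<le> Q" and "At A ^\<^sub>m Q * (At S * At R) = At A ^\<^sub>m (Q + (K1 + K2))"
    and "At B ^\<^sub>m Q * (At R * At S) = At B ^\<^sub>m (Q + (K1 + K2))"
    unfolding eventually_sequentially by (meson le_refl)
  then have "shift_equiv_via A B (Q + (K1 + K2)) R (S * A ^\<^sub>m Q)"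
    using eventual_inverses_imp_shift_equiv_via[OF A B R S RA SB] by blast
  moreover have "unital_SE A B R"
    using \<Theta>_iso \<Theta>[OF one_vec_carrier, of 0] unital_SE_iff[OF A B R] A
    by (auto simp: unital_dim_data_iso_def dg_unit_def)
  ultimately show ?thesis unfolding unitally_shift_equivalent_def by blast
qed

theorem proposition3p2:
  fixes A B :: "nat mat" and n m :: nat
  assumes "A \<in> carrier_mat n n" and "B \<in> carrier_mat m m"
  shows "unitally_shift_equivalent A B \<longleftrightarrow>
    (\<exists>\<Theta>. \<Theta> \<in> iso (dim_group A) (dim_group B) \<and>
         \<Theta> ` dg_pos A = dg_pos B \<and>
         (\<forall>X \<in> carrier (dim_group A). \<Theta> (dg_theta A X) = dg_theta B (\<Theta> X)) \<and>
         \<Theta> (dg_unit A) = dg_unit B)"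
  unfolding unital_dim_data_iso_def[symmetric]
  using unitally_shift_equivalent_imp_unital_dim_data_iso[OF assms]
    unital_dim_data_iso_imp_unitally_shift_equivalent[OF assms] by blast

end
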